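(* Let $R$ be a commutative ring, $n\ge 1$, and let $\varphi$ be an invertible alternating $2n\times 2n$ matrix with entries in $R$, regarded also as a matrix over the polynomial ring $R[X]$. Then $${\rm E}_{\varphi}(R[X],(X))={\rm E}_{\varphi}(R[X])\cap {\rm GL}_{2n-1}(R[X],(X)).$$
   Context: All rings are commutative with identity. Elements of $R^{m}$ are row vectors; ${}^t$ denotes transpose. A square matrix is alternating if it has the form $\nu-\nu^t$. For an invertible alternating $2n\times 2n$ matrix $\varphi$ over a ring $S$, write $\varphi=\begin{pmatrix}0&-c\\ c^t&\nu\end{pmatrix}$, $\varphi^{-1}=\begin{pmatrix}0&d\\ -d^t&\mu\end{pmatrix}$ with $c,d\in S^{2n-1}$, and for $v\in S^{2n-1}$ set $\alpha_\varphi(v)=I_{2n-1}+d^tv\nu$, $\beta_\varphi(v)=I_{2n-1}+\mu v^tc$. ${\rm E}_\varphi(S)$ is the subgroup of ${\rm GL}_{2n-1}(S)$ generated by all $\alpha_\varphi(v),\beta_\varphi(v)$, $v\in S^{2n-1}$. For an ideal $J$ of $S$, ${\rm E}_\varphi(J)$ is the subgroup generated by $\alpha_\varphi(v),\beta_\varphi(v)$ with $v\in J^{2n-1}$, and ${\rm E}_\varphi(S,J)$ is the normal closure of ${\rm E}_\varphi(J)$ in ${\rm E}_\varphi(S)$. Here $S=R[X]$, $J=(X)$, and ${\rm GL}_{2n-1}(R[X],(X))$ is the group of invertible matrices over $R[X]$ congruent to the identity modulo $(X)$ (i.e. equal to the identity after setting $X=0$). *)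

theory Defs
  imports "Jordan_Normal_Form.Matrix" "HOL-Computational_Algebra.Polynomial"
begin

definition alternating_mat :: "'a::comm_ring_1 mat \<Rightarrow> bool" where
  "alternating_mat A \<longleftrightarrow>
     (\<exists>\<nu> \<in> carrier_mat (dim_row A) (dim_row A). A = \<nu> - transpose_mat \<nu>)"

definition inv_of_mat :: "'a::comm_ring_1 mat \<Rightarrow> 'a mat" where
  "inv_of_mat A = (SOME B. B \<in> carrier_mat (dim_row A) (dim_row A) \<and>
       A * B = 1\<^sub>m (dim_row A) \<and> B * A = 1\<^sub>m (dim_row A))"

text \<open>Block decomposition: phi = [[0, -c], [c^t, nu]], phi^-1 = [[0, d], [-d^t, mu]];
  c, d are 1 x (2n-1) row vectors, nu, mu are (2n-1) x (2n-1).\<close>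
definition blk_c :: "'a::comm_ring_1 mat \<Rightarrow> 'a mat" where
  "blk_c \<phi> = mat 1 (dim_row \<phi> - 1) (\<lambda>(i,j). - (\<phi> $$ (0, j+1)))"
definition blk_nu :: "'a::comm_ring_1 mat \<Rightarrow> 'a mat" where
  "blk_nu \<phi> = mat (dim_row \<phi> - 1) (dim_row \<phi> - 1) (\<lambda>(i,j). \<phi> $$ (i+1, j+1))"
definition blk_d :: "'a::comm_ring_1 mat \<Rightarrow> 'a mat" where
  "blk_d \<phi> = mat 1 (dim_row \<phi> - 1) (\<lambda>(i,j). inv_of_mat \<phi> $$ (0, j+1))"
definition blk_mu :: "'a::comm_ring_1 mat \<Rightarrow> 'a mat" where
  "blk_mu \<phi> = mat (dim_row \<phi> - 1) (dim_row \<phi> - 1) (\<lambda>(i,j). inv_of_mat \<phi> $$ (i+1, j+1))"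

definition alpha_phi :: "'a::comm_ring_1 mat \<Rightarrow> 'a mat \<Rightarrow> 'a mat" where
  "alpha_phi \<phi> v = 1\<^sub>m (dim_row \<phi> - 1) + transpose_mat (blk_d \<phi>) * v * blk_nu \<phi>"
definition beta_phi :: "'a::comm_ring_1 mat \<Rightarrow> 'a mat \<Rightarrow> 'a mat" where
  "beta_phi \<phi> v = 1\<^sub>m (dim_row \<phi> - 1) + blk_mu \<phi> * transpose_mat v * blk_c \<phi>"

inductive_set gen_grp :: "nat \<Rightarrow> 'a::comm_ring_1 mat set \<Rightarrow> 'a mat set"
  for m :: nat and G :: "'a mat set" where
  one: "1\<^sub>m m \<in> gen_grp m G"
| left: "g \<in> gen_grp m G \<Longrightarrow> s \<in> G \<Longrightarrow> s * g \<in> gen_grp m G"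
| left_inv: "g \<in> gen_grp m G \<Longrightarrow> s \<in> G \<Longrightarrow> t \<in> carrier_mat m m \<Longrightarrow>
     s * t = 1\<^sub>m m \<Longrightarrow> t * s = 1\<^sub>m m \<Longrightarrow> t * g \<in> gen_grp m G"

definition rowvecs :: "'a::comm_ring_1 mat \<Rightarrow> 'a set \<Rightarrow> 'a mat set" where
  "rowvecs \<phi> J = {v \<in> carrier_mat 1 (dim_row \<phi> - 1). \<forall>j < dim_row \<phi> - 1. v $$ (0, j) \<in> J}"

definition E_phi :: "'a::comm_ring_1 mat \<Rightarrow> 'a set \<Rightarrow> 'a mat set" where
  "E_phi \<phi> J = gen_grp (dim_row \<phi> - 1)
     ({alpha_phi \<phi> v | v. v \<in> rowvecs \<phi> J} \<union> {beta_phi \<phi> v | v. v \<in> rowvecs \<phi> J})"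

definition E_phi_rel :: "'a::comm_ring_1 mat \<Rightarrow> 'a set \<Rightarrow> 'a mat set" where
  "E_phi_rel \<phi> J = gen_grp (dim_row \<phi> - 1)
     {g * h * t | g h t. g \<in> E_phi \<phi> UNIV \<and> h \<in> E_phi \<phi> J \<and>
        t \<in> carrier_mat (dim_row \<phi> - 1) (dim_row \<phi> - 1) \<and>
        g * t = 1\<^sub>m (dim_row \<phi> - 1) \<and> t * g = 1\<^sub>m (dim_row \<phi> - 1)}"

definition ideal_X :: "'a::comm_ring_1 poly set" where
  "ideal_X = {p. [:0, 1:] dvd p}"

definition GL_X :: "nat \<Rightarrow> 'a::comm_ring_1 poly mat set" where
  "GL_X m = {M \<in> carrier_mat m m. invertible_mat M \<and> map_mat (\<lambda>p. poly p 0) M = 1\<^sub>m m}"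

end

theory Submission
  imports Defs
begin

text \<open>Because \<open>\<phi>\<close> is alternating and \<open>\<phi> \<phi>\<^sup>-\<^sup>1 = 1\<close>, one has \<open>\<nu> d\<^sup>t = 0\<close> and \<open>c \<mu> = 0\<close>, so
  \<open>\<alpha>\<^sub>\<phi>\<close> and \<open>\<beta>\<^sub>\<phi>\<close> turn addition of row vectors into multiplication. Let \<open>\<epsilon>\<close> be the
  endomorphism \<open>p \<mapsto> p(0)\<close> of \<open>R[X]\<close>; it fixes \<open>\<phi>\<close> and has kernel \<open>(X)\<close>. Hence every
  generator factors as \<open>\<alpha>\<^sub>\<phi>(v) = \<alpha>\<^sub>\<phi>(\<epsilon> v) \<alpha>\<^sub>\<phi>(v - \<epsilon> v)\<close> with the second factor in
  \<open>E\<^sub>\<phi>(X)\<close>, and since \<open>E\<^sub>\<phi>(R[X],(X))\<close> is normalised by \<open>E\<^sub>\<phi>(R[X])\<close>, induction on words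
  shows \<open>g = k \<epsilon>(g)\<close> with \<open>k \<in> E\<^sub>\<phi>(R[X],(X))\<close> for every \<open>g \<in> E\<^sub>\<phi>(R[X])\<close>. So \<open>\<epsilon>(g) = 1\<close>
  forces \<open>g \<in> E\<^sub>\<phi>(R[X],(X))\<close>; conversely \<open>\<epsilon>\<close> kills \<open>E\<^sub>\<phi>(X)\<close> and hence its normal closure.
  The argument only uses that \<open>\<epsilon>\<close> is an idempotent ring endomorphism fixing \<open>\<phi>\<close> whose
  kernel is the ideal in question.\<close>

lemma mat_inverse_unique:
  fixes A B C :: "'a::semiring_1 mat"
  assumes A: "A \<in> carrier_mat n n" and B: "B \<in> carrier_mat n n" and C: "C \<in> carrier_mat n n"
    and AB: "A * B = 1\<^sub>m n" and CA: "C * A = 1\<^sub>m n"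
  shows "B = C"
proof -
  have "B = (C * A) * B" using B CA by (simp add: left_mult_one_mat)
  also have "\<dots> = C * (A * B)" using C A B by (rule assoc_mult_mat)
  also have "\<dots> = C" using C AB by (simp add: right_mult_one_mat)
  finally show ?thesis .
qed

text \<open>Unlike \<open>assoc_mult_mat\<close>, this form determines all dimensions from the conclusion,
  so the simplifier can discharge its premises.\<close>
lemma assoc_mult_square_mat:
  "A \<in> carrier_mat n n \<Longrightarrow> B \<in> carrier_mat n n \<Longrightarrow> C \<in> carrier_mat n n \<Longrightarrow>
    A * B * C = A * (B * C)"
  by (rule assoc_mult_mat)

lemma mult_inverse_cancel_mat:
  fixes A B C :: "'a::semiring_1 mat"
  assumes "A \<in> carrier_mat n n" "B \<in> carrier_mat n n" "C \<in> carrier_mat n k" "A * B = 1\<^sub>m n"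
  shows "A * (B * C) = C"
  using assoc_mult_mat[OF assms(1-3), symmetric] assms(3,4) by (simp add: left_mult_one_mat)

lemma invertible_mat_obtain_inverse:
  fixes A :: "'a::semiring_1 mat"
  assumes "invertible_mat A"
  obtains B where "B \<in> carrier_mat (dim_row A) (dim_row A)"
    "A * B = 1\<^sub>m (dim_row A)" "B * A = 1\<^sub>m (dim_row A)"
proof -
  from assms obtain B where sq: "dim_row A = dim_col A"
    and AB: "A * B = 1\<^sub>m (dim_row A)" and BA: "B * A = 1\<^sub>m (dim_row B)"
    unfolding invertible_mat_def inverts_mat_def by auto
  have "dim_col B = dim_row A" using arg_cong[OF AB, of dim_col] by simp
  moreover have "dim_row B = dim_row A" using arg_cong[OF BA, of dim_col] sq by simp
  ultimately show ?thesis using that AB BA by auto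
qed

lemma inv_of_mat_inverse:
  fixes A :: "'a::comm_ring_1 mat"
  assumes "invertible_mat A"
  shows "inv_of_mat A \<in> carrier_mat (dim_row A) (dim_row A)"
    "A * inv_of_mat A = 1\<^sub>m (dim_row A)" "inv_of_mat A * A = 1\<^sub>m (dim_row A)"
proof -
  obtain B where "B \<in> carrier_mat (dim_row A) (dim_row A)"
    "A * B = 1\<^sub>m (dim_row A)" "B * A = 1\<^sub>m (dim_row A)"
    using invertible_mat_obtain_inverse[OF assms] .
  then have "\<exists>B. B \<in> carrier_mat (dim_row A) (dim_row A) \<and>
      A * B = 1\<^sub>m (dim_row A) \<and> B * A = 1\<^sub>m (dim_row A)" by blast
  from someI_ex[OF this] show "inv_of_mat A \<in> carrier_mat (dim_row A) (dim_row A)"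
    "A * inv_of_mat A = 1\<^sub>m (dim_row A)" "inv_of_mat A * A = 1\<^sub>m (dim_row A)"
    unfolding inv_of_mat_def by auto
qed

lemma one_plus_mult_mat:
  fixes X Y :: "'a::semiring_1 mat"
  assumes X: "X \<in> carrier_mat n n" and Y: "Y \<in> carrier_mat n n" and XY: "X * Y = 0\<^sub>m n n"
  shows "(1\<^sub>m n + X) * (1\<^sub>m n + Y) = 1\<^sub>m n + (X + Y)"
proof -
  have "(1\<^sub>m n + X) * (1\<^sub>m n + Y) = 1\<^sub>m n * (1\<^sub>m n + Y) + X * (1\<^sub>m n + Y)"
    using X Y by (intro add_mult_distrib_mat) auto
  also have "X * (1\<^sub>m n + Y) = X * 1\<^sub>m n + X * Y"
    using X Y by (intro mult_add_distrib_mat) auto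
  finally show ?thesis using X Y XY by (auto intro!: eq_matI simp: add_ac)
qed

lemma add_uminus_mat:
  fixes A :: "'a::ab_group_add mat"
  assumes "A \<in> carrier_mat k n"
  shows "A + - A = 0\<^sub>m k n"
  using carrier_matD[OF assms] by (auto intro!: eq_matI)

lemma map_mat_eq_one_mat_iff:
  assumes "x \<in> carrier_mat k k"
  shows "map_mat g x = 1\<^sub>m k \<longleftrightarrow> (\<forall>i<k. \<forall>j<k. g (x $$ (i,j)) = (if i = j then 1 else 0))"
  using assms by (auto simp: mat_eq_iff)

lemma (in semiring_hom) mat_hom_add:
  "P \<in> carrier_mat nr nc \<Longrightarrow> Q \<in> carrier_mat nr nc \<Longrightarrow> mat\<^sub>h (P + Q) = mat\<^sub>h P + mat\<^sub>h Q"
  by (rule eq_matI) (auto simp: hom_add)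

lemma (in semiring_hom) invertible_mat_hom:
  assumes "invertible_mat A"
  shows "invertible_mat (mat\<^sub>h A)"
proof -
  let ?n = "dim_row A"
  obtain B where B: "B \<in> carrier_mat ?n ?n" "A * B = 1\<^sub>m ?n" "B * A = 1\<^sub>m ?n"
    using invertible_mat_obtain_inverse[OF assms] .
  have A: "A \<in> carrier_mat ?n ?n"
    using assms unfolding invertible_mat_def square_mat.simps by blast
  have "mat\<^sub>h A * mat\<^sub>h B = 1\<^sub>m ?n"
    by (simp only: mat_hom_mult[OF A B(1), symmetric] B(2) mat_hom_one)
  moreover have "mat\<^sub>h B * mat\<^sub>h A = 1\<^sub>m ?n"
    by (simp only: mat_hom_mult[OF B(1) A, symmetric] B(3) mat_hom_one)
  moreover have "dim_row (mat\<^sub>h A) = ?n" "dim_row (mat\<^sub>h B) = ?n" "dim_col (mat\<^sub>h A) = ?n"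
    using carrier_matD[OF A] carrier_matD[OF B(1)] by simp_all
  ultimately show ?thesis
    unfolding invertible_mat_def inverts_mat_def square_mat.simps
    by (intro conjI exI[of _ "mat\<^sub>h B"]) simp_all
qed

lemma (in comm_ring_hom) alternating_mat_hom:
  assumes "alternating_mat A"
  shows "alternating_mat (mat\<^sub>h A)"
proof -
  from assms obtain W where W: "W \<in> carrier_mat (dim_row A) (dim_row A)"
    and A: "A = W - transpose_mat W"
    unfolding alternating_mat_def by blast
  have "mat\<^sub>h A = mat\<^sub>h W - transpose_mat (mat\<^sub>h W)"
    unfolding A using W by (auto intro!: eq_matI simp: hom_distribs)
  then show ?thesis using W unfolding alternating_mat_def by auto
qed

lemma sum_alternating_form_self:
  fixes x :: "nat \<Rightarrow> 'a::comm_ring_1"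
  shows "(\<Sum>k\<in>{0..<N}. (\<Sum>l\<in>{0..<N}. x l * (W l k - W k l)) * x k) = 0"
proof -
  have "(\<Sum>k\<in>{0..<N}. (\<Sum>l\<in>{0..<N}. x l * (W l k - W k l)) * x k)
     = (\<Sum>k\<in>{0..<N}. \<Sum>l\<in>{0..<N}. x l * W l k * x k)
       - (\<Sum>k\<in>{0..<N}. \<Sum>l\<in>{0..<N}. x l * W k l * x k)"
    by (simp add: sum_distrib_right sum_subtractf[symmetric] right_diff_distrib left_diff_distrib)
  also have "(\<Sum>k\<in>{0..<N}. \<Sum>l\<in>{0..<N}. x l * W k l * x k)
      = (\<Sum>l\<in>{0..<N}. \<Sum>k\<in>{0..<N}. x l * W k l * x k)"
    by (rule sum.swap)
  also have "\<dots> = (\<Sum>k\<in>{0..<N}. \<Sum>l\<in>{0..<N}. x l * W l k * x k)"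
    by (intro sum.cong refl) (simp add: ac_simps)
  finally show ?thesis by simp
qed

lemma gen_grp_carrier:
  assumes "G \<subseteq> carrier_mat m m" and "g \<in> gen_grp m G"
  shows "g \<in> carrier_mat m m"
  using assms(2) by induct (use assms(1) in auto)

lemma gen_grp_mult:
  assumes G: "G \<subseteq> carrier_mat m m" and g: "g \<in> gen_grp m G" and h: "h \<in> gen_grp m G"
  shows "g * h \<in> gen_grp m G"
  using g
proof induct
  case one
  then show ?case using gen_grp_carrier[OF G h] h by simp
next
  case (left g s)
  have "s * g * h = s * (g * h)"
    using G left(3) gen_grp_carrier[OF G left(1)] gen_grp_carrier[OF G h] by auto
  then show ?case using gen_grp.left[OF left(2,3)] by simp
next
  case (left_inv g s t)
  have "t * g * h = t * (g * h)"
    using left_inv(4) gen_grp_carrier[OF G left_inv(1)] gen_grp_carrier[OF G h] by auto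
  then show ?case using gen_grp.left_inv[OF left_inv(2-6)] by simp
qed

lemma gen_grp_generator:
  assumes "G \<subseteq> carrier_mat m m" and "s \<in> G"
  shows "s \<in> gen_grp m G"
  using gen_grp.left[OF gen_grp.one[of m] assms(2)] assms by auto

lemma gen_grp_generator_inverse:
  assumes "s \<in> G" "t \<in> carrier_mat m m" "s * t = 1\<^sub>m m" "t * s = 1\<^sub>m m"
  shows "t \<in> gen_grp m G"
  using gen_grp.left_inv[OF gen_grp.one[of m] assms] assms(2) by auto

lemma gen_grp_inverse:
  assumes G: "G \<subseteq> carrier_mat m m"
    and G_inv: "\<And>s. s \<in> G \<Longrightarrow> \<exists>t\<in>carrier_mat m m. s * t = 1\<^sub>m m \<and> t * s = 1\<^sub>m m"
    and g: "g \<in> gen_grp m G"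
  shows "\<exists>g'\<in>gen_grp m G. g * g' = 1\<^sub>m m \<and> g' * g = 1\<^sub>m m"
  using g
proof induct
  case one
  show ?case by (intro bexI[of _ "1\<^sub>m m"]) (auto intro: gen_grp.one)
next
  case (left g s)
  from G_inv[OF left(3)] obtain t where t: "t \<in> carrier_mat m m" "s * t = 1\<^sub>m m" "t * s = 1\<^sub>m m"
    by blast
  have tG: "t \<in> gen_grp m G" using gen_grp_generator_inverse[OF left(3) t] .
  from left(2) obtain g' where g': "g' \<in> gen_grp m G" "g * g' = 1\<^sub>m m" "g' * g = 1\<^sub>m m" by blast
  have c: "g \<in> carrier_mat m m" "g' \<in> carrier_mat m m" "s \<in> carrier_mat m m"
    using gen_grp_carrier[OF G] g' left G by auto
  have "s * g * (g' * t) = s * (g * (g' * t))" using c t by (simp add: assoc_mult_square_mat)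
  then have "s * g * (g' * t) = 1\<^sub>m m" using mult_inverse_cancel_mat[of g m g' t] c t g' by simp
  moreover have "(g' * t) * (s * g) = g' * (t * (s * g))" using c t by (simp add: assoc_mult_square_mat)
  then have "(g' * t) * (s * g) = 1\<^sub>m m" using mult_inverse_cancel_mat[of t m s g] c t g' by simp
  ultimately show ?case using gen_grp_mult[OF G g'(1) tG] by blast
next
  case (left_inv g s t)
  have sG: "s \<in> gen_grp m G" using gen_grp_generator[OF G left_inv(3)] .
  from left_inv(2) obtain g' where g': "g' \<in> gen_grp m G" "g * g' = 1\<^sub>m m" "g' * g = 1\<^sub>m m" by blast
  have c: "g \<in> carrier_mat m m" "g' \<in> carrier_mat m m" "s \<in> carrier_mat m m" "t \<in> carrier_mat m m"
    using gen_grp_carrier[OF G] g' left_inv G by auto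
  have "t * g * (g' * s) = t * (g * (g' * s))" using c by (simp add: assoc_mult_square_mat)
  then have "t * g * (g' * s) = 1\<^sub>m m" using mult_inverse_cancel_mat[of g m g' s] c g' left_inv by simp
  moreover have "(g' * s) * (t * g) = g' * (s * (t * g))" using c by (simp add: assoc_mult_square_mat)
  then have "(g' * s) * (t * g) = 1\<^sub>m m" using mult_inverse_cancel_mat[of s m t g] c g' left_inv by simp
  ultimately show ?case using gen_grp_mult[OF G g'(1) sG] by blast
qed

lemma gen_grp_subgroup:
  assumes G: "G \<subseteq> carrier_mat m m"
    and G_inv: "\<And>s. s \<in> G \<Longrightarrow> \<exists>t\<in>carrier_mat m m. s * t = 1\<^sub>m m \<and> t * s = 1\<^sub>m m"
    and H: "H \<subseteq> gen_grp m G"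
  shows "gen_grp m H \<subseteq> gen_grp m G"
proof
  fix x assume "x \<in> gen_grp m H"
  then show "x \<in> gen_grp m G"
  proof induct
    case one
    show ?case by (rule gen_grp.one)
  next
    case (left g s)
    then show ?case using gen_grp_mult[OF G] H by blast
  next
    case (left_inv g s t)
    have sG: "s \<in> gen_grp m G" using H left_inv by blast
    from gen_grp_inverse[OF G G_inv sG] obtain s' where
      s': "s' \<in> gen_grp m G" "s * s' = 1\<^sub>m m" "s' * s = 1\<^sub>m m" by blast
    have "t = s'"
      using mat_inverse_unique[of s m t s'] gen_grp_carrier[OF G] sG s' left_inv by auto
    then show ?case using gen_grp_mult[OF G s'(1) left_inv(2)] by simp
  qed
qed

lemma gen_grp_conj:
  assumes G: "G \<subseteq> carrier_mat m m"
    and x: "x \<in> carrier_mat m m" "x' \<in> carrier_mat m m" "x * x' = 1\<^sub>m m" "x' * x = 1\<^sub>m m"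
    and conj_G: "\<And>r. r \<in> G \<Longrightarrow> x * r * x' \<in> G"
    and y: "y \<in> gen_grp m G"
  shows "x * y * x' \<in> gen_grp m G"
  using y
proof induct
  case one
  have "x * 1\<^sub>m m * x' = 1\<^sub>m m" using x by simp
  then show ?case using gen_grp.one by metis
next
  case (left y r)
  have c: "y \<in> carrier_mat m m" "r \<in> carrier_mat m m"
    using G left gen_grp_carrier[OF G left(1)] by auto
  have "x * (r * y) * x' = (x * r * x') * (x * y * x')"
    using x c by (auto simp: assoc_mult_square_mat mult_inverse_cancel_mat[of x' m x _ m])
  then show ?case using gen_grp.left[OF left(2) conj_G[OF left(3)]] by simp
next
  case (left_inv y r t)
  have c: "y \<in> carrier_mat m m" "r \<in> carrier_mat m m" "t \<in> carrier_mat m m"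
    using G left_inv gen_grp_carrier[OF G left_inv(1)] by auto
  have "x * (t * y) * x' = (x * t * x') * (x * y * x')"
    using x c by (auto simp: assoc_mult_square_mat mult_inverse_cancel_mat[of x' m x _ m])
  moreover have "(x * r * x') * (x * t * x') = 1\<^sub>m m"
    using x c left_inv(5)
    by (auto simp: assoc_mult_square_mat mult_inverse_cancel_mat[of x' m x _ m]
        mult_inverse_cancel_mat[of r m t _ m])
  moreover have "(x * t * x') * (x * r * x') = 1\<^sub>m m"
    using x c left_inv(6)
    by (auto simp: assoc_mult_square_mat mult_inverse_cancel_mat[of x' m x _ m]
        mult_inverse_cancel_mat[of t m r _ m])
  ultimately show ?case
    using gen_grp.left_inv[OF left_inv(2) conj_G[OF left_inv(3)]] x c by auto
qed

lemma (in comm_ring_hom) gen_grp_mat_hom_one: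
  assumes G: "G \<subseteq> carrier_mat m m" and G_one: "\<And>s. s \<in> G \<Longrightarrow> mat\<^sub>h s = 1\<^sub>m m"
    and x: "x \<in> gen_grp m G"
  shows "mat\<^sub>h x = 1\<^sub>m m"
  using x
proof induct
  case one
  show ?case by (rule mat_hom_one)
next
  case (left g s)
  then show ?case
    using G_one mat_hom_mult[of s m m g m] G gen_grp_carrier[OF G left(1)] by auto
next
  case (left_inv g s t)
  have "mat\<^sub>h t = mat\<^sub>h s * mat\<^sub>h t" using G_one[OF left_inv(3)] left_inv(4) by simp
  also have "\<dots> = 1\<^sub>m m"
    using mat_hom_mult[of s m m t m] G left_inv(3-5) by (auto simp: mat_hom_one)
  finally show ?case
    using left_inv mat_hom_mult[of t m m g m] gen_grp_carrier[OF G left_inv(1)] by auto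
qed

locale invertible_alternating =
  fixes A :: "'b::comm_ring_1 mat" and N :: nat
  assumes A_carrier: "A \<in> carrier_mat N N" and alternating: "alternating_mat A"
    and invertible: "invertible_mat A" and N_pos: "1 \<le> N"
begin

abbreviation "m \<equiv> N - 1"
abbreviation "Ainv \<equiv> inv_of_mat A"
abbreviation "dT \<equiv> transpose_mat (blk_d A)"
abbreviation "\<nu> \<equiv> blk_nu A"
abbreviation "\<mu> \<equiv> blk_mu A"
abbreviation "c \<equiv> blk_c A"

lemma dim_A [simp]: "dim_row A = N" "dim_col A = N"
  using A_carrier by auto

lemma Ainv_inverse: "Ainv \<in> carrier_mat N N" "A * Ainv = 1\<^sub>m N" "Ainv * A = 1\<^sub>m N"
  using inv_of_mat_inverse[OF invertible] by simp_all

lemma alternating_entries: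
  obtains W where "\<And>i j. i < N \<Longrightarrow> j < N \<Longrightarrow> A $$ (i,j) = W $$ (i,j) - W $$ (j,i)"
proof -
  from alternating obtain W where W: "W \<in> carrier_mat N N" "A = W - transpose_mat W"
    unfolding alternating_mat_def by auto
  show ?thesis by (rule that) (subst W(2), use W(1) in auto)
qed

lemma A_antisym: "i < N \<Longrightarrow> j < N \<Longrightarrow> A $$ (i,j) = - A $$ (j,i)"
  by (rule alternating_entries) simp

lemma A_diag: "i < N \<Longrightarrow> A $$ (i,i) = 0"
  by (rule alternating_entries) simp

lemma Ainv_antisym: "i < N \<Longrightarrow> j < N \<Longrightarrow> Ainv $$ (i,j) = - Ainv $$ (j,i)"
proof -
  assume ij: "i < N" "j < N"
  have "transpose_mat A = - A"
  proof (rule eq_matI)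
    fix i j assume "i < dim_row (- A)" "j < dim_col (- A)"
    then show "transpose_mat A $$ (i, j) = (- A) $$ (i, j)" using A_antisym[of j i] by simp
  qed auto
  moreover have "transpose_mat Ainv * transpose_mat A = 1\<^sub>m N"
    using transpose_mult[OF A_carrier Ainv_inverse(1), symmetric] Ainv_inverse(2) by simp
  ultimately have "(- transpose_mat Ainv) * A = 1\<^sub>m N"
    using Ainv_inverse(1) by simp
  then have "Ainv = - transpose_mat Ainv"
    using mat_inverse_unique[of A N Ainv "- transpose_mat Ainv"] A_carrier Ainv_inverse by auto
  then have "Ainv $$ (i,j) = (- transpose_mat Ainv) $$ (i,j)" by simp
  then show ?thesis using ij Ainv_inverse(1) by simp
qed

text \<open>Since \<open>Ainv = Ainv A Ainv\<close> and \<open>Ainv\<close> is antisymmetric, this entry is the value of the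
  alternating form \<open>A\<close> at the first row of \<open>Ainv\<close>; antisymmetry alone would not suffice
  in characteristic 2.\<close>
lemma Ainv_00: "Ainv $$ (0,0) = 0"
proof -
  obtain W where W: "\<And>i j. i < N \<Longrightarrow> j < N \<Longrightarrow> A $$ (i,j) = W $$ (i,j) - W $$ (j,i)"
    using alternating_entries by blast
  define x where "x l = Ainv $$ (0,l)" for l
  have "Ainv * A * Ainv = Ainv" using Ainv_inverse by simp
  then have "Ainv $$ (0,0) = (Ainv * A * Ainv) $$ (0,0)" by simp
  also have "\<dots> = (\<Sum>k\<in>{0..<N}. (\<Sum>l\<in>{0..<N}. x l * A $$ (l,k)) * Ainv $$ (k,0))"
    using N_pos Ainv_inverse(1) by (auto simp: scalar_prod_def x_def intro!: sum.cong)
  also have "\<dots> = - (\<Sum>k\<in>{0..<N}. (\<Sum>l\<in>{0..<N}. x l * (W $$ (l,k) - W $$ (k,l))) * x k)"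
  proof -
    have "Ainv $$ (k,0) = - x k" if "k < N" for k
      using Ainv_antisym[of k 0] N_pos that by (simp add: x_def)
    then show ?thesis by (auto simp: sum_negf[symmetric] W intro!: sum.cong)
  qed
  also have "\<dots> = 0" by (simp add: sum_alternating_form_self)
  finally show ?thesis .
qed

lemma blocks_carrier:
  "dT \<in> carrier_mat m 1" "\<nu> \<in> carrier_mat m m" "\<mu> \<in> carrier_mat m m" "c \<in> carrier_mat 1 m"
  by (auto simp: blk_d_def blk_nu_def blk_mu_def blk_c_def)

lemma sum_split_first: "(\<Sum>k\<in>{0..<N}. f k) = f 0 + (\<Sum>k\<in>{0..<m}. f (Suc k))"
  using N_pos by (cases N) (auto simp: sum.atLeast0_lessThan_Suc_shift simp del: sum.op_ivl_Suc)

text \<open>Entry \<open>(i+1, 0)\<close> of \<open>A Ainv = 1\<close>; the corner term vanishes by \<open>Ainv_00\<close>.\<close>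
lemma nu_dT: "\<nu> * dT = 0\<^sub>m m 1"
proof (rule eq_matI)
  fix i j assume "i < dim_row (0\<^sub>m m 1 :: 'b mat)" "j < dim_col (0\<^sub>m m 1 :: 'b mat)"
  then have i: "i < m" and j: "j = 0" by auto
  have "(\<Sum>k\<in>{0..<N}. A $$ (Suc i, k) * Ainv $$ (k, 0)) = (A * Ainv) $$ (Suc i, 0)"
    using i Ainv_inverse(1) by (simp add: scalar_prod_def)
  also have "\<dots> = 0" using i Ainv_inverse(2) by simp
  finally have "(\<Sum>k\<in>{0..<m}. A $$ (Suc i, Suc k) * Ainv $$ (Suc k, 0)) = 0"
    by (simp add: sum_split_first Ainv_00)
  then have "(\<Sum>k\<in>{0..<m}. A $$ (Suc i, Suc k) * Ainv $$ (0, Suc k)) = 0"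
    by (simp add: Ainv_antisym[of _ 0] N_pos sum_negf)
  then show "(\<nu> * dT) $$ (i, j) = 0\<^sub>m m 1 $$ (i, j)"
    using i j by (simp add: scalar_prod_def blk_nu_def blk_d_def)
qed (auto simp: blk_nu_def blk_d_def)

text \<open>Entry \<open>(0, j+1)\<close> of \<open>A Ainv = 1\<close>; the corner term vanishes since \<open>A\<close> is alternating.\<close>
lemma c_mu: "c * \<mu> = 0\<^sub>m 1 m"
proof (rule eq_matI)
  fix i j assume "i < dim_row (0\<^sub>m 1 m :: 'b mat)" "j < dim_col (0\<^sub>m 1 m :: 'b mat)"
  then have j: "j < m" and i: "i = 0" by auto
  have "(\<Sum>k\<in>{0..<N}. A $$ (0, k) * Ainv $$ (k, Suc j)) = (A * Ainv) $$ (0, Suc j)"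
    using j Ainv_inverse(1) by (simp add: scalar_prod_def)
  also have "\<dots> = 0" using j Ainv_inverse(2) by simp
  finally have "(\<Sum>k\<in>{0..<m}. - A $$ (0, Suc k) * Ainv $$ (Suc k, Suc j)) = 0"
    using A_diag[of 0] N_pos by (simp add: sum_split_first sum_negf)
  then show "(c * \<mu>) $$ (i, j) = 0\<^sub>m 1 m $$ (i, j)"
    using i j by (simp add: scalar_prod_def blk_c_def blk_mu_def)
qed (auto simp: blk_c_def blk_mu_def)

lemma alpha_carrier: "v \<in> carrier_mat 1 m \<Longrightarrow> alpha_phi A v \<in> carrier_mat m m"
  using blocks_carrier by (auto simp: alpha_phi_def)

lemma beta_carrier: "v \<in> carrier_mat 1 m \<Longrightarrow> beta_phi A v \<in> carrier_mat m m"
  using blocks_carrier by (auto simp: beta_phi_def)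

lemma alpha_add:
  assumes v: "v \<in> carrier_mat 1 m" and w: "w \<in> carrier_mat 1 m"
  shows "alpha_phi A v * alpha_phi A w = alpha_phi A (v + w)"
proof -
  note carr = blocks_carrier
  have dv: "dT * v \<in> carrier_mat m m" and dw: "dT * w \<in> carrier_mat m m"
    using carr v w by auto
  have "(dT * v * \<nu>) * (dT * w * \<nu>) = (dT * v) * (\<nu> * (dT * w * \<nu>))"
    using dv carr(2) mult_carrier_mat[OF dw carr(2)] by (rule assoc_mult_mat)
  also have "\<nu> * (dT * w * \<nu>) = (\<nu> * (dT * w)) * \<nu>"
    using carr(2) dw by (intro assoc_mult_mat[symmetric]) auto
  also have "\<nu> * (dT * w) = (\<nu> * dT) * w"
    using carr(2) carr(1) w by (rule assoc_mult_mat[symmetric])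
  finally have XY: "(dT * v * \<nu>) * (dT * w * \<nu>) = 0\<^sub>m m m"
    unfolding nu_dT using right_mult_zero_mat[OF dv] w carr(2) by simp
  have "dT * v * \<nu> + dT * w * \<nu> = dT * (v + w) * \<nu>"
    using carr v w by (simp add: mult_add_distrib_mat[of _ m 1] add_mult_distrib_mat[of _ m m])
  then show ?thesis
    unfolding alpha_phi_def dim_A using one_plus_mult_mat[OF _ _ XY] dv dw carr(2) by simp
qed

lemma beta_add:
  assumes v: "v \<in> carrier_mat 1 m" and w: "w \<in> carrier_mat 1 m"
  shows "beta_phi A v * beta_phi A w = beta_phi A (v + w)"
proof -
  note carr = blocks_carrier
  have vt: "transpose_mat v \<in> carrier_mat m 1" and wt: "transpose_mat w \<in> carrier_mat m 1"
    using v w by auto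
  have mv: "\<mu> * transpose_mat v \<in> carrier_mat m 1" and mw: "\<mu> * transpose_mat w \<in> carrier_mat m 1"
    using carr vt wt by auto
  have "(\<mu> * transpose_mat v * c) * (\<mu> * transpose_mat w * c)
      = (\<mu> * transpose_mat v) * (c * (\<mu> * transpose_mat w * c))"
    using mv carr(4) mult_carrier_mat[OF mw carr(4)] by (rule assoc_mult_mat)
  also have "c * (\<mu> * transpose_mat w * c) = (c * (\<mu> * transpose_mat w)) * c"
    using carr(4) mw by (intro assoc_mult_mat[symmetric]) auto
  also have "c * (\<mu> * transpose_mat w) = (c * \<mu>) * transpose_mat w"
    using carr(4) carr(3) wt by (rule assoc_mult_mat[symmetric])
  finally have XY: "(\<mu> * transpose_mat v * c) * (\<mu> * transpose_mat w * c) = 0\<^sub>m m m"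
    unfolding c_mu using right_mult_zero_mat[OF mv] wt carr(4) by simp
  have "\<mu> * transpose_mat v * c + \<mu> * transpose_mat w * c = \<mu> * transpose_mat (v + w) * c"
    using carr vt wt
    by (simp add: transpose_add[OF v w] mult_add_distrib_mat[of _ m m] add_mult_distrib_mat[of _ m 1])
  then show ?thesis
    unfolding beta_phi_def dim_A using one_plus_mult_mat[OF _ _ XY] mv mw carr(4) by simp
qed

lemma alpha_zero: "alpha_phi A (0\<^sub>m 1 m) = 1\<^sub>m m"
  unfolding alpha_phi_def using blocks_carrier by simp

lemma beta_zero: "beta_phi A (0\<^sub>m 1 m) = 1\<^sub>m m"
proof -
  have "transpose_mat (0\<^sub>m 1 m) = (0\<^sub>m m 1 :: 'b mat)" by (rule eq_matI) auto
  then show ?thesis unfolding beta_phi_def using blocks_carrier by simp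
qed

lemma alpha_inverse:
  assumes "v \<in> carrier_mat 1 m"
  shows "alpha_phi A v * alpha_phi A (- v) = 1\<^sub>m m" "alpha_phi A (- v) * alpha_phi A v = 1\<^sub>m m"
  using alpha_add[OF assms uminus_carrier_mat[OF assms]] alpha_add[OF uminus_carrier_mat[OF assms] assms]
  by (simp_all only: add_uminus_mat[OF assms] uminus_l_inv_mat[OF assms] alpha_zero)

lemma beta_inverse:
  assumes "v \<in> carrier_mat 1 m"
  shows "beta_phi A v * beta_phi A (- v) = 1\<^sub>m m" "beta_phi A (- v) * beta_phi A v = 1\<^sub>m m"
  using beta_add[OF assms uminus_carrier_mat[OF assms]] beta_add[OF uminus_carrier_mat[OF assms] assms]
  by (simp_all only: add_uminus_mat[OF assms] uminus_l_inv_mat[OF assms] beta_zero)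

definition generators :: "'b set \<Rightarrow> 'b mat set" where
  "generators J = {alpha_phi A v | v. v \<in> rowvecs A J} \<union> {beta_phi A v | v. v \<in> rowvecs A J}"

definition conjugates :: "'b set \<Rightarrow> 'b mat set" where
  "conjugates J = {g * h * t | g h t. g \<in> E_phi A UNIV \<and> h \<in> E_phi A J \<and>
     t \<in> carrier_mat m m \<and> g * t = 1\<^sub>m m \<and> t * g = 1\<^sub>m m}"

lemma E_phi_gen_grp: "E_phi A J = gen_grp m (generators J)"
  unfolding E_phi_def generators_def by simp

lemma E_phi_rel_gen_grp: "E_phi_rel A J = gen_grp m (conjugates J)"
  unfolding E_phi_rel_def conjugates_def by simp

lemma rowvecs_subset: "rowvecs A J \<subseteq> carrier_mat 1 m"
  unfolding rowvecs_def by auto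

lemma rowvecs_UNIV: "rowvecs A UNIV = carrier_mat 1 m"
  unfolding rowvecs_def by auto

lemma generators_carrier: "generators J \<subseteq> carrier_mat m m"
  unfolding generators_def using rowvecs_subset alpha_carrier beta_carrier by blast

lemma generators_mono: "J \<subseteq> K \<Longrightarrow> generators J \<subseteq> generators K"
  unfolding generators_def rowvecs_def by blast

lemma generatorsE:
  assumes "s \<in> generators J"
  obtains v where "v \<in> rowvecs A J" "s = alpha_phi A v" | v where "v \<in> rowvecs A J" "s = beta_phi A v"
  using assms unfolding generators_def by blast

lemma generators_inverse:
  assumes "s \<in> generators J"
  obtains t where "t \<in> generators UNIV" "s * t = 1\<^sub>m m" "t * s = 1\<^sub>m m"
  using assms
proof (cases rule: generatorsE)
  case (1 v)
  then have v: "v \<in> carrier_mat 1 m" using rowvecs_subset by blast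
  then have "alpha_phi A (- v) \<in> generators UNIV"
    unfolding generators_def rowvecs_UNIV by auto
  then show ?thesis using that alpha_inverse[OF v] 1(2) by blast
next
  case (2 v)
  then have v: "v \<in> carrier_mat 1 m" using rowvecs_subset by blast
  then have "beta_phi A (- v) \<in> generators UNIV"
    unfolding generators_def rowvecs_UNIV by auto
  then show ?thesis using that beta_inverse[OF v] 2(2) by blast
qed

lemma generators_invertible:
  assumes "s \<in> generators J"
  shows "\<exists>t\<in>carrier_mat m m. s * t = 1\<^sub>m m \<and> t * s = 1\<^sub>m m"
proof -
  obtain t where "t \<in> generators UNIV" "s * t = 1\<^sub>m m" "t * s = 1\<^sub>m m"
    using generators_inverse[OF assms] .
  then show ?thesis using generators_carrier by blast
qed

lemma generators_UNIV_inverse_closed: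
  assumes s: "s \<in> generators UNIV" and t: "t \<in> carrier_mat m m" "s * t = 1\<^sub>m m" "t * s = 1\<^sub>m m"
  shows "t \<in> generators UNIV"
proof -
  obtain t' where t': "t' \<in> generators UNIV" "s * t' = 1\<^sub>m m" "t' * s = 1\<^sub>m m"
    using generators_inverse[OF s] .
  have "s \<in> carrier_mat m m" "t' \<in> carrier_mat m m"
    using s t'(1) generators_carrier by blast+
  then have "t = t'" using mat_inverse_unique t t'(3) by blast
  then show ?thesis using t' by simp
qed

lemma E_phi_carrier: "g \<in> E_phi A J \<Longrightarrow> g \<in> carrier_mat m m"
  unfolding E_phi_gen_grp using gen_grp_carrier[OF generators_carrier] .

lemma E_phi_mult: "g \<in> E_phi A J \<Longrightarrow> h \<in> E_phi A J \<Longrightarrow> g * h \<in> E_phi A J"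
  unfolding E_phi_gen_grp using gen_grp_mult[OF generators_carrier] .

lemma E_phi_generator: "s \<in> generators J \<Longrightarrow> s \<in> E_phi A J"
  unfolding E_phi_gen_grp using gen_grp_generator[OF generators_carrier] .

lemma E_phi_inverse:
  "g \<in> E_phi A J \<Longrightarrow> \<exists>g'\<in>E_phi A J. g * g' = 1\<^sub>m m \<and> g' * g = 1\<^sub>m m"
  unfolding E_phi_gen_grp using gen_grp_inverse[OF generators_carrier generators_invertible] .

lemma E_phi_invertible:
  assumes "g \<in> E_phi A J"
  shows "invertible_mat g"
proof -
  obtain g' where "g' \<in> E_phi A J" "g * g' = 1\<^sub>m m" "g' * g = 1\<^sub>m m"
    using E_phi_inverse[OF assms] by blast
  with carrier_matD[OF E_phi_carrier[OF assms]] carrier_matD[OF E_phi_carrier[of g' J]]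
  show ?thesis unfolding invertible_mat_def inverts_mat_def square_mat.simps by metis
qed

lemma E_phi_mono:
  assumes "J \<subseteq> K"
  shows "E_phi A J \<subseteq> E_phi A K"
proof -
  have "generators J \<subseteq> gen_grp m (generators K)"
    using generators_mono[OF assms] gen_grp_generator[OF generators_carrier] by blast
  then show ?thesis
    unfolding E_phi_gen_grp by (intro gen_grp_subgroup generators_carrier generators_invertible)
qed

lemma conjugates_subset: "conjugates J \<subseteq> E_phi A UNIV"
proof
  fix r assume "r \<in> conjugates J"
  then obtain g h t where r: "r = g * h * t" "g \<in> E_phi A UNIV" "h \<in> E_phi A J"
    "t \<in> carrier_mat m m" "g * t = 1\<^sub>m m" "t * g = 1\<^sub>m m"
    unfolding conjugates_def by blast
  obtain g' where g': "g' \<in> E_phi A UNIV" "g * g' = 1\<^sub>m m" "g' * g = 1\<^sub>m m"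
    using E_phi_inverse[OF r(2)] by blast
  have "t = g'"
    using mat_inverse_unique[OF E_phi_carrier[OF r(2)] r(4) E_phi_carrier[OF g'(1)] r(5) g'(3)] .
  moreover have "h \<in> E_phi A UNIV" using r(3) E_phi_mono by blast
  ultimately show "r \<in> E_phi A UNIV" using r(1,2) g'(1) E_phi_mult by blast
qed

lemma conjugates_carrier: "conjugates J \<subseteq> carrier_mat m m"
  using conjugates_subset E_phi_carrier by blast

lemma E_phi_rel_subset: "E_phi_rel A J \<subseteq> E_phi A UNIV"
  unfolding E_phi_rel_gen_grp E_phi_gen_grp
  by (intro gen_grp_subgroup generators_carrier generators_invertible
      conjugates_subset[unfolded E_phi_gen_grp])

lemma E_phi_rel_carrier: "x \<in> E_phi_rel A J \<Longrightarrow> x \<in> carrier_mat m m"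
  using E_phi_rel_subset E_phi_carrier by blast

lemma E_phi_rel_mult:
  "x \<in> E_phi_rel A J \<Longrightarrow> y \<in> E_phi_rel A J \<Longrightarrow> x * y \<in> E_phi_rel A J"
  unfolding E_phi_rel_gen_grp using gen_grp_mult[OF conjugates_carrier] .

lemma conj_E_phi_in_rel:
  assumes "g \<in> E_phi A UNIV" "h \<in> E_phi A J" "g' \<in> carrier_mat m m"
    "g * g' = 1\<^sub>m m" "g' * g = 1\<^sub>m m"
  shows "g * h * g' \<in> E_phi_rel A J"
proof -
  have "g * h * g' \<in> conjugates J" unfolding conjugates_def using assms by blast
  then show ?thesis
    unfolding E_phi_rel_gen_grp using gen_grp_generator[OF conjugates_carrier] by blast
qed

lemma conjugates_conj:
  assumes x: "x \<in> E_phi A UNIV" "x' \<in> carrier_mat m m" "x * x' = 1\<^sub>m m" "x' * x = 1\<^sub>m m"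
    and r: "r \<in> conjugates J"
  shows "x * r * x' \<in> conjugates J"
proof -
  obtain g h t where r: "r = g * h * t" "g \<in> E_phi A UNIV" "h \<in> E_phi A J"
    "t \<in> carrier_mat m m" "g * t = 1\<^sub>m m" "t * g = 1\<^sub>m m"
    using r unfolding conjugates_def by blast
  have c: "x \<in> carrier_mat m m" "g \<in> carrier_mat m m" "h \<in> carrier_mat m m"
    using E_phi_carrier x(1) r(2,3) by blast+
  have "(x * g) * (t * x') = x * (g * (t * x'))"
    using c r(4) x(2) by (simp add: assoc_mult_square_mat)
  also have "\<dots> = 1\<^sub>m m"
    using mult_inverse_cancel_mat[OF c(2) r(4) x(2) r(5)] x(3) by simp
  finally have "(x * g) * (t * x') = 1\<^sub>m m" .
  moreover have "(t * x') * (x * g) = t * (x' * (x * g))"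
    using c r(4) x(2) by (simp add: assoc_mult_square_mat)
  then have "(t * x') * (x * g) = 1\<^sub>m m"
    using mult_inverse_cancel_mat[OF x(2) c(1) c(2) x(4)] r(6) by simp
  moreover have "x * r * x' = (x * g) * h * (t * x')"
    unfolding r(1) using c r(4) x(2) by (simp add: assoc_mult_square_mat)
  ultimately show ?thesis
    unfolding conjugates_def using E_phi_mult[OF x(1) r(2)] r(3) mult_carrier_mat[OF r(4) x(2)]
    by blast
qed

lemma E_phi_rel_conj:
  assumes "x \<in> E_phi A UNIV" "x' \<in> carrier_mat m m" "x * x' = 1\<^sub>m m" "x' * x = 1\<^sub>m m"
    and "y \<in> E_phi_rel A J"
  shows "x * y * x' \<in> E_phi_rel A J"
  using gen_grp_conj[OF conjugates_carrier E_phi_carrier[OF assms(1)] assms(2-4)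
      conjugates_conj[OF assms(1-4)] assms(5)[unfolded E_phi_rel_gen_grp]]
  unfolding E_phi_rel_gen_grp .

end

locale alternating_retraction = invertible_alternating A N + comm_ring_hom f
  for A :: "'b::comm_ring_1 mat" and N and f :: "'b \<Rightarrow> 'b" +
  fixes J :: "'b set"
  assumes f_idem: "f (f x) = f x"
    and kernel: "x \<in> J \<longleftrightarrow> f x = 0"
    and f_fixes_A: "i < N \<Longrightarrow> j < N \<Longrightarrow> f (A $$ (i,j)) = A $$ (i,j)"
begin

lemma map_A: "map_mat f A = A"
  by (rule eq_matI) (auto simp: f_fixes_A)

lemma map_Ainv: "map_mat f Ainv = Ainv"
proof -
  have "A * map_mat f Ainv = map_mat f (A * Ainv)"
    by (simp add: mat_hom_mult[OF A_carrier Ainv_inverse(1)] map_A)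
  also have "\<dots> = 1\<^sub>m N" by (simp add: Ainv_inverse(2) mat_hom_one)
  finally have "A * map_mat f Ainv = 1\<^sub>m N" .
  moreover have "map_mat f Ainv \<in> carrier_mat N N" using Ainv_inverse(1) by simp
  ultimately show ?thesis
    using mat_inverse_unique[OF A_carrier _ Ainv_inverse(1) _ Ainv_inverse(3)] by blast
qed

lemma f_fixes_Ainv: "i < N \<Longrightarrow> j < N \<Longrightarrow> f (Ainv $$ (i,j)) = Ainv $$ (i,j)"
  using arg_cong[OF map_Ainv, of "\<lambda>M. M $$ (i,j)"] Ainv_inverse(1) by simp

lemma map_blocks: "map_mat f dT = dT" "map_mat f \<nu> = \<nu>" "map_mat f \<mu> = \<mu>" "map_mat f c = c"
  by (rule eq_matI;
      auto simp: blk_d_def blk_nu_def blk_mu_def blk_c_def f_fixes_A f_fixes_Ainv hom_uminus)+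

lemma map_alpha:
  assumes v: "v \<in> carrier_mat 1 m"
  shows "map_mat f (alpha_phi A v) = alpha_phi A (map_mat f v)"
proof -
  have dv: "dT * v \<in> carrier_mat m m" using blocks_carrier v by auto
  have "map_mat f (dT * v * \<nu>) = map_mat f dT * map_mat f v * map_mat f \<nu>"
    by (simp only: mat_hom_mult[OF dv blocks_carrier(2)] mat_hom_mult[OF blocks_carrier(1) v])
  then show ?thesis
    unfolding alpha_phi_def dim_A
    using mat_hom_add[OF one_carrier_mat mult_carrier_mat[OF dv blocks_carrier(2)]]
    by (simp add: mat_hom_one map_blocks)
qed

lemma map_beta:
  assumes v: "v \<in> carrier_mat 1 m"
  shows "map_mat f (beta_phi A v) = beta_phi A (map_mat f v)"
proof -
  have vt: "transpose_mat v \<in> carrier_mat m 1" using v by auto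
  have mv: "\<mu> * transpose_mat v \<in> carrier_mat m 1" using blocks_carrier vt by auto
  have "map_mat f (\<mu> * transpose_mat v * c)
      = map_mat f \<mu> * transpose_mat (map_mat f v) * map_mat f c"
    by (simp only: mat_hom_mult[OF mv blocks_carrier(4)] mat_hom_mult[OF blocks_carrier(3) vt]
        map_mat_transpose)
  then show ?thesis
    unfolding beta_phi_def dim_A
    using mat_hom_add[OF one_carrier_mat mult_carrier_mat[OF mv blocks_carrier(4)]]
    by (simp add: mat_hom_one map_blocks)
qed

lemma row_minus_map_in_rowvecs:
  assumes "v \<in> carrier_mat 1 m"
  shows "v - map_mat f v \<in> rowvecs A J"
  using assms carrier_matD[OF assms] by (auto simp: rowvecs_def kernel hom_distribs f_idem)

lemma map_plus_diff_row:
  assumes "v \<in> carrier_mat 1 m"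
  shows "map_mat f v + (v - map_mat f v) = v"
  using carrier_matD[OF assms] by (auto intro!: eq_matI)

lemma generator_split:
  assumes "s \<in> generators UNIV"
  obtains h where "h \<in> generators J" "s = map_mat f s * h" "map_mat f s \<in> generators UNIV"
  using assms
proof (cases rule: generatorsE)
  case (1 v)
  then have v: "v \<in> carrier_mat 1 m" using rowvecs_UNIV by simp
  have "s = alpha_phi A (map_mat f v) * alpha_phi A (v - map_mat f v)"
    using alpha_add[of "map_mat f v" "v - map_mat f v"] minus_carrier_mat[of "map_mat f v"]
      map_plus_diff_row[OF v] v 1(2)
    by simp
  moreover have "alpha_phi A (v - map_mat f v) \<in> generators J"
    using row_minus_map_in_rowvecs[OF v] unfolding generators_def by blast
  moreover have "alpha_phi A (map_mat f v) \<in> generators UNIV"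
    using v unfolding generators_def rowvecs_UNIV by auto
  ultimately show ?thesis using that map_alpha[OF v] 1(2) by simp
next
  case (2 v)
  then have v: "v \<in> carrier_mat 1 m" using rowvecs_UNIV by simp
  have "s = beta_phi A (map_mat f v) * beta_phi A (v - map_mat f v)"
    using beta_add[of "map_mat f v" "v - map_mat f v"] minus_carrier_mat[of "map_mat f v"]
      map_plus_diff_row[OF v] v 2(2)
    by simp
  moreover have "beta_phi A (v - map_mat f v) \<in> generators J"
    using row_minus_map_in_rowvecs[OF v] unfolding generators_def by blast
  moreover have "beta_phi A (map_mat f v) \<in> generators UNIV"
    using v unfolding generators_def rowvecs_UNIV by auto
  ultimately show ?thesis using that map_beta[OF v] 2(2) by simp
qed

lemma map_generators_J: "s \<in> generators J \<Longrightarrow> map_mat f s = 1\<^sub>m m"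
proof -
  have zero: "map_mat f v = 0\<^sub>m 1 m" if "v \<in> rowvecs A J" for v
    using that unfolding rowvecs_def by (auto intro!: eq_matI simp: kernel)
  assume "s \<in> generators J"
  then show ?thesis
  proof (cases rule: generatorsE)
    case (1 v)
    then have "v \<in> carrier_mat 1 m" using rowvecs_subset by blast
    then show ?thesis using map_alpha zero[OF 1(1)] alpha_zero 1(2) by simp
  next
    case (2 v)
    then have "v \<in> carrier_mat 1 m" using rowvecs_subset by blast
    then show ?thesis using map_beta zero[OF 2(1)] beta_zero 2(2) by simp
  qed
qed

lemma map_E_phi_J: "h \<in> E_phi A J \<Longrightarrow> map_mat f h = 1\<^sub>m m"
  unfolding E_phi_gen_grp by (rule gen_grp_mat_hom_one[OF generators_carrier map_generators_J])

lemma map_conjugates: "r \<in> conjugates J \<Longrightarrow> map_mat f r = 1\<^sub>m m"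
proof -
  assume "r \<in> conjugates J"
  then obtain g h t where r: "r = g * h * t" "g \<in> E_phi A UNIV" "h \<in> E_phi A J"
    "t \<in> carrier_mat m m" "g * t = 1\<^sub>m m"
    unfolding conjugates_def by blast
  have c: "g \<in> carrier_mat m m" "h \<in> carrier_mat m m" using r(2,3) E_phi_carrier by blast+
  have "map_mat f r = map_mat f g * map_mat f h * map_mat f t"
    unfolding r(1) by (simp only: mat_hom_mult[OF mult_carrier_mat[OF c] r(4)] mat_hom_mult[OF c])
  also have "\<dots> = map_mat f (g * t)"
    using map_E_phi_J[OF r(3)] carrier_matD[OF c(1)] by (simp add: mat_hom_mult[OF c(1) r(4)])
  finally show ?thesis using r(5) by (simp add: mat_hom_one)
qed

lemma map_E_phi_rel: "x \<in> E_phi_rel A J \<Longrightarrow> map_mat f x = 1\<^sub>m m"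
  unfolding E_phi_rel_gen_grp by (rule gen_grp_mat_hom_one[OF conjugates_carrier map_conjugates])

text \<open>The inductive step of \<open>E_phi_factor\<close>: with \<open>s = s\<^sub>0 h\<close> from \<open>generator_split\<close>,
  \<open>s k g\<^sub>0 = (s\<^sub>0 h s\<^sub>0\<^sup>-\<^sup>1) (s\<^sub>0 k s\<^sub>0\<^sup>-\<^sup>1) s\<^sub>0 g\<^sub>0\<close>.\<close>
lemma E_phi_factor_step:
  assumes s: "s \<in> generators UNIV" and g: "g \<in> carrier_mat m m"
    and k: "k \<in> E_phi_rel A J" and gk: "g = k * map_mat f g"
  shows "\<exists>k'\<in>E_phi_rel A J. s * g = k' * map_mat f (s * g)"
proof -
  obtain h where h: "h \<in> generators J" "s = map_mat f s * h"
    and s0: "map_mat f s \<in> generators UNIV"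
    using generator_split[OF s] by blast
  define s0 where "s0 = map_mat f s"
  define g0 where "g0 = map_mat f g"
  obtain s0' where s0': "s0' \<in> generators UNIV" "s0 * s0' = 1\<^sub>m m" "s0' * s0 = 1\<^sub>m m"
    using generators_inverse[OF s0] unfolding s0_def by blast
  have sc: "s \<in> carrier_mat m m" using s generators_carrier by blast
  have c: "s0 \<in> carrier_mat m m" "s0' \<in> carrier_mat m m" "h \<in> carrier_mat m m"
    "k \<in> carrier_mat m m" "g0 \<in> carrier_mat m m"
    using sc s0'(1) h(1) generators_carrier E_phi_rel_carrier[OF k] g
    unfolding s0_def g0_def by auto
  have "s0 * h * s0' \<in> E_phi_rel A J"
    using conj_E_phi_in_rel E_phi_generator s0 h(1) c(2) s0'(2,3) unfolding s0_def by blast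
  moreover have "s0 * k * s0' \<in> E_phi_rel A J"
    using E_phi_rel_conj E_phi_generator s0 c(2) s0'(2,3) k unfolding s0_def by blast
  moreover have "s * g = (s0 * h * s0') * (s0 * k * s0') * (s0 * g0)"
  proof -
    have "s * g = s0 * h * (k * g0)" using h(2) gk unfolding s0_def g0_def by simp
    also have "\<dots> = (s0 * h * s0') * (s0 * k * s0') * (s0 * g0)"
      using c s0'(3)
      by (simp add: assoc_mult_square_mat mult_inverse_cancel_mat[of s0' m s0 _ m])
    finally show ?thesis .
  qed
  moreover have "map_mat f (s * g) = s0 * g0"
    unfolding s0_def g0_def by (rule mat_hom_mult[OF sc g])
  ultimately show ?thesis using E_phi_rel_mult by metis
qed

lemma E_phi_factor:
  assumes "g \<in> E_phi A UNIV"
  shows "\<exists>k\<in>E_phi_rel A J. g = k * map_mat f g"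
  using assms[unfolded E_phi_gen_grp]
proof induct
  case one
  have "1\<^sub>m m \<in> E_phi_rel A J" unfolding E_phi_rel_gen_grp by (rule gen_grp.one)
  then show ?case by (intro bexI[of _ "1\<^sub>m m"]) (simp_all add: mat_hom_one)
next
  case (left g s)
  then show ?case
    using E_phi_factor_step gen_grp_carrier[OF generators_carrier left(1)] by blast
next
  case (left_inv g s t)
  then show ?case
    using E_phi_factor_step generators_UNIV_inverse_closed
      gen_grp_carrier[OF generators_carrier left_inv(1)]
    by blast
qed

theorem E_phi_rel_eq_kernel: "E_phi_rel A J = {g \<in> E_phi A UNIV. map_mat f g = 1\<^sub>m m}"
proof (intro equalityI subsetI CollectI conjI)
  fix g assume "g \<in> E_phi_rel A J"
  then show "g \<in> E_phi A UNIV" "map_mat f g = 1\<^sub>m m"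
    using E_phi_rel_subset map_E_phi_rel by blast+
next
  fix g assume "g \<in> {g \<in> E_phi A UNIV. map_mat f g = 1\<^sub>m m}"
  then have g: "g \<in> E_phi A UNIV" "map_mat f g = 1\<^sub>m m" by auto
  obtain k where "k \<in> E_phi_rel A J" "g = k * map_mat f g" using E_phi_factor[OF g(1)] by blast
  then show "g \<in> E_phi_rel A J"
    using g(2) E_phi_rel_carrier by (metis right_mult_one_mat)
qed

end

definition const_term :: "'a::comm_ring_1 poly \<Rightarrow> 'a poly" where
  "const_term p = [:poly p 0:]"

lemma comm_ring_hom_const_term: "comm_ring_hom const_term"
  by unfold_locales (auto simp: const_term_def)

lemma const_term_idem: "const_term (const_term p) = const_term p"
  by (simp add: const_term_def)

lemma ideal_X_iff_const_term: "p \<in> ideal_X \<longleftrightarrow> const_term p = 0"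
  unfolding ideal_X_def const_term_def using dvd_iff_poly_eq_0[of 0 p] by simp

lemma eval_zero_eq_one_iff_const_term:
  fixes x :: "'a::comm_ring_1 poly mat"
  assumes "x \<in> carrier_mat k k"
  shows "map_mat (\<lambda>p. poly p 0) x = 1\<^sub>m k \<longleftrightarrow> map_mat const_term x = 1\<^sub>m k"
  using assms by (simp add: map_mat_eq_one_mat_iff const_term_def one_pCons)

theorem lemma3p8:
  fixes \<phi> :: "'a::comm_ring_1 mat" and n :: nat
  assumes "n \<ge> 1"
    and "\<phi> \<in> carrier_mat (2*n) (2*n)"
    and "alternating_mat \<phi>"
    and "invertible_mat \<phi>"
  shows "E_phi_rel (map_mat (\<lambda>a. [:a:]) \<phi>) ideal_X
         = E_phi (map_mat (\<lambda>a. [:a:]) \<phi>) UNIV \<inter> GL_X (2*n - 1)"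
proof -
  interpret const_poly: comm_ring_hom "\<lambda>a::'a. [:a:]"
    by unfold_locales (auto simp: one_pCons)
  let ?\<psi> = "map_mat (\<lambda>a. [:a:]) \<phi>"
  interpret alternating_retraction ?\<psi> "2*n" const_term ideal_X
  proof (intro alternating_retraction.intro invertible_alternating.intro
      alternating_retraction_axioms.intro comm_ring_hom_const_term)
    show "?\<psi> \<in> carrier_mat (2*n) (2*n)" using assms(2) by simp
    show "alternating_mat ?\<psi>" using const_poly.alternating_mat_hom[OF assms(3)] .
    show "invertible_mat ?\<psi>" using const_poly.invertible_mat_hom[OF assms(4)] .
  qed (use assms(1,2) in \<open>auto simp: const_term_idem ideal_X_iff_const_term const_term_def\<close>)
  have "E_phi ?\<psi> UNIV \<inter> GL_X (2*n - 1)
      = {g \<in> E_phi ?\<psi> UNIV. map_mat const_term g = 1\<^sub>m (2*n - 1)}"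
    using E_phi_carrier E_phi_invertible eval_zero_eq_one_iff_const_term unfolding GL_X_def by blast
  then show ?thesis using E_phi_rel_eq_kernel by simp
qed

end
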